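(* Let $A \in\mathbb{C}^{n\times n}$, and fix $A^-\in A\{1\}$ and $A^{GD}\in A\{GD\}$. Then $A^{1GD}=A^-AA^{GD}$ is the unique matrix $X\in\mathbb{C}^{n\times n}$ satisfying $$AX = P_{R(A),N(AA^{GD})} \quad\text{and}\quad R(X)\subseteq R(A^{-}A).$$
   Context: For $A\in\mathbb{C}^{n\times n}$, $ind(A)$ is the smallest nonnegative integer $k$ with $\mathrm{rank}(A^k)=\mathrm{rank}(A^{k+1})$. $A\{1\}$ is the set of matrices $X$ with $AXA=A$. With $k=ind(A)$, $A\{GD\}$ is the set of G-Drazin inverses of $A$: matrices $X$ with $AXA=A$, $XA^{k+1}=A^k$, $A^{k+1}X=A^k$. $R(\cdot)$, $N(\cdot)$ denote range and null space; $P_{S,T}$ is the projector onto $S$ along $T$. *)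

theory Defs
  imports "HOL-Analysis.Analysis"
begin

text \<open>Matrix power with respect to matrix multiplication (the built-in power on
  vector types is componentwise, so we define the matrix power explicitly).\<close>
fun matpow :: "'a::semiring_1^'n^'n \<Rightarrow> nat \<Rightarrow> 'a^'n^'n" where
  "matpow A 0 = mat 1"
| "matpow A (Suc k) = A ** matpow A k"

definition ind :: "'a::field^'n^'n \<Rightarrow> nat" where
  "ind A = (LEAST k. rank (matpow A k) = rank (matpow A (Suc k)))"

definition mat_range :: "'a::semiring_1^'n^'m \<Rightarrow> ('a^'m) set" where
  "mat_range A = {A *v x | x. True}"

definition mat_null :: "'a::semiring_1^'n^'m \<Rightarrow> ('a^'n) set" where
  "mat_null A = {x. A *v x = 0}"

definition inner_inverses :: "'a::semiring_1^'n^'n \<Rightarrow> ('a^'n^'n) set" where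
  "inner_inverses A = {X. A ** X ** A = A}"

definition gdrazin_inverses :: "'a::field^'n^'n \<Rightarrow> ('a^'n^'n) set" where
  "gdrazin_inverses A = {X. A ** X ** A = A
      \<and> X ** matpow A (Suc (ind A)) = matpow A (ind A)
      \<and> matpow A (Suc (ind A)) ** X = matpow A (ind A)}"

definition is_projector_onto_along :: "'a::semiring_1^'n^'n \<Rightarrow> ('a^'n) set \<Rightarrow> ('a^'n) set \<Rightarrow> bool" where
  "is_projector_onto_along P S T \<longleftrightarrow> P ** P = P \<and> mat_range P = S \<and> mat_null P = T"

end

theory Submission
  imports Defs
begin

text \<open>Both \<open>A A\<^sup>G\<^sup>D\<close> and \<open>A\<^sup>- A\<close> are idempotent because \<open>A\<^sup>-\<close> and \<open>A\<^sup>G\<^sup>D\<close> are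
  inner inverses, and \<open>R(A A\<^sup>G\<^sup>D) = R(A)\<close>. So \<open>A A\<^sup>G\<^sup>D\<close> is the projector onto \<open>R(A)\<close> along
  \<open>N(A A\<^sup>G\<^sup>D)\<close>, and since a projector is determined by its range and null space, the first
  condition says exactly \<open>A X = A A\<^sup>G\<^sup>D\<close>. The second condition says \<open>A\<^sup>- A X = X\<close>, because
  \<open>A\<^sup>- A\<close> is idempotent; together they force \<open>X = A\<^sup>- A A\<^sup>G\<^sup>D\<close>.\<close>

lemma mat_range_matrix_mul_subset:
  fixes A :: "'a::comm_semiring_1^'n^'m" and B :: "'a^'p^'n"
  shows "mat_range (A ** B) \<subseteq> mat_range A"
  unfolding mat_range_def by (auto simp: matrix_vector_mul_assoc[symmetric])

lemma mat_range_matrix_mul_inner_inverse: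
  fixes A :: "'a::comm_semiring_1^'n^'m" and B :: "'a^'m^'n"
  assumes "A ** B ** A = A"
  shows "mat_range (A ** B) = mat_range A"
proof
  show "mat_range (A ** B) \<subseteq> mat_range A"
    by (rule mat_range_matrix_mul_subset)
  show "mat_range A \<subseteq> mat_range (A ** B)"
  proof
    fix y assume "y \<in> mat_range A"
    then obtain x where "y = A *v x" unfolding mat_range_def by auto
    then have "y = (A ** B) *v (A *v x)"
      by (metis assms matrix_vector_mul_assoc)
    then show "y \<in> mat_range (A ** B)" unfolding mat_range_def by auto
  qed
qed

lemma idempotent_mul_inner_inverse_left:
  fixes A :: "'a::comm_semiring_1^'n^'m" and B :: "'a^'m^'n"
  assumes "A ** B ** A = A"
  shows "(A ** B) ** (A ** B) = A ** B"
proof -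
  have "(A ** B) ** (A ** B) = (A ** B ** A) ** B" by (simp add: matrix_mul_assoc)
  then show ?thesis by (simp add: assms)
qed

lemma idempotent_mul_inner_inverse_right:
  fixes A :: "'a::comm_semiring_1^'n^'m" and B :: "'a^'m^'n"
  assumes "A ** B ** A = A"
  shows "(B ** A) ** (B ** A) = B ** A"
proof -
  have "(B ** A) ** (B ** A) = B ** (A ** B ** A)" by (simp add: matrix_mul_assoc)
  then show ?thesis by (simp add: assms)
qed

lemma idempotent_fixes_mat_range:
  fixes P :: "'a::comm_semiring_1^'n^'n"
  assumes "P ** P = P" and "y \<in> mat_range P"
  shows "P *v y = y"
proof -
  obtain x where y: "y = P *v x" using assms(2) unfolding mat_range_def by auto
  then have "P *v y = (P ** P) *v x" by (simp add: matrix_vector_mul_assoc)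
  also have "\<dots> = y" using assms(1) y by simp
  finally show ?thesis .
qed

lemma mat_range_subset_idempotent_iff:
  fixes P :: "'a::comm_semiring_1^'n^'n" and X :: "'a^'p^'n"
  assumes "P ** P = P"
  shows "mat_range X \<subseteq> mat_range P \<longleftrightarrow> P ** X = X"
proof
  assume range: "mat_range X \<subseteq> mat_range P"
  have "(P ** X) *v x = X *v x" for x
  proof -
    have "X *v x \<in> mat_range P" using range unfolding mat_range_def by auto
    then have "P *v (X *v x) = X *v x" by (rule idempotent_fixes_mat_range[OF assms])
    then show ?thesis by (simp add: matrix_vector_mul_assoc)
  qed
  then show "P ** X = X" by (simp add: matrix_eq)
next
  assume "P ** X = X"
  then show "mat_range X \<subseteq> mat_range P"
    using mat_range_matrix_mul_subset[of P X] by simp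
qed

text \<open>A vector \<open>x\<close> splits as \<open>Q x + (x - Q x)\<close> with \<open>Q x \<in> S\<close> and \<open>x - Q x \<in> T\<close>,
  on which \<open>P\<close> acts as the identity and as zero respectively.\<close>

lemma projector_onto_along_unique:
  fixes P Q :: "'a::comm_ring_1^'n^'n"
  assumes "is_projector_onto_along P S T" and "is_projector_onto_along Q S T"
  shows "P = Q"
proof (subst matrix_eq, intro allI)
  fix x :: "'a^'n"
  have P: "P ** P = P" "mat_range P = S" "mat_null P = T"
    and Q: "Q ** Q = Q" "mat_range Q = S" "mat_null Q = T"
    using assms by (auto simp: is_projector_onto_along_def)
  have "Q *v x \<in> mat_range P"
    using P(2) Q(2) unfolding mat_range_def by auto
  then have on_range: "P *v (Q *v x) = Q *v x"
    using idempotent_fixes_mat_range[OF P(1)] by blast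
  have "Q *v (x - Q *v x) = 0"
    using Q(1) by (simp add: matrix_vector_mult_diff_distrib matrix_vector_mul_assoc)
  then have "P *v (x - Q *v x) = 0"
    using P(3) Q(3) unfolding mat_null_def by auto
  with on_range show "P *v x = Q *v x"
    by (simp add: matrix_vector_mult_diff_distrib)
qed

theorem theorem3p4:
  fixes A Am Agd :: "complex^'n^'n"
  assumes "Am \<in> inner_inverses A"
      and "Agd \<in> gdrazin_inverses A"
  shows "\<forall>X :: complex^'n^'n.
           (is_projector_onto_along (A ** X) (mat_range A) (mat_null (A ** Agd))
            \<and> mat_range X \<subseteq> mat_range (Am ** A))
           \<longleftrightarrow> X = Am ** A ** Agd"
proof
  fix X :: "complex^'n^'n"
  have AmA: "A ** Am ** A = A" using assms(1) by (simp add: inner_inverses_def)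
  have AGA: "A ** Agd ** A = A" using assms(2) by (simp add: gdrazin_inverses_def)
  have AG_projector: "is_projector_onto_along (A ** Agd) (mat_range A) (mat_null (A ** Agd))"
    using idempotent_mul_inner_inverse_left[OF AGA] mat_range_matrix_mul_inner_inverse[OF AGA]
    by (simp add: is_projector_onto_along_def)
  have range_AmA: "mat_range Y \<subseteq> mat_range (Am ** A) \<longleftrightarrow> Am ** A ** Y = Y"
    for Y :: "complex^'n^'n"
    by (simp add: mat_range_subset_idempotent_iff idempotent_mul_inner_inverse_right[OF AmA])
  show "(is_projector_onto_along (A ** X) (mat_range A) (mat_null (A ** Agd))
          \<and> mat_range X \<subseteq> mat_range (Am ** A)) \<longleftrightarrow> X = Am ** A ** Agd"
  proof
    assume "is_projector_onto_along (A ** X) (mat_range A) (mat_null (A ** Agd))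
              \<and> mat_range X \<subseteq> mat_range (Am ** A)"
    then have "A ** X = A ** Agd" and "Am ** A ** X = X"
      using projector_onto_along_unique[OF _ AG_projector] range_AmA by auto
    then show "X = Am ** A ** Agd" by (metis matrix_mul_assoc)
  next
    assume X: "X = Am ** A ** Agd"
    then have "A ** X = A ** Agd" by (metis AmA matrix_mul_assoc)
    moreover have "mat_range X \<subseteq> mat_range (Am ** A)"
      unfolding X by (rule mat_range_matrix_mul_subset)
    ultimately show "is_projector_onto_along (A ** X) (mat_range A) (mat_null (A ** Agd))
                 \<and> mat_range X \<subseteq> mat_range (Am ** A)"
      using AG_projector by simp
  qed
qed

end
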